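(* Let $\mathcal{Z}=\{(\boldsymbol{z}_i,y_i)\}_{i=1}^{n}$ be labeled representations with $\|\boldsymbol{z}_i\|_2=1$ and labels $y_i\in\{1,\dots,N_C\}$; let $\mathcal{C}_k=\{i: y_i=k\}$ be the set of support samples of class $k$. For each class $k$ let $\boldsymbol{c}_k$ be a prototype representation with $\|\boldsymbol{c}_k\|_2=1$, and for each sample $i$ write $\boldsymbol{c}_i$ for the (expanded) prototype of its class, i.e. the $n$ prototype representations $\{\boldsymbol{c}_i\}_{i=1}^n$ satisfy $\boldsymbol{c}_i=\boldsymbol{c}_{y_i}$. Define \[ \mathcal{L}_{\rm SCE}=-\frac{1}{n}\sum_{i=1}^{n}\log\frac{\exp(\boldsymbol{z}_i^{\top}\boldsymbol{c}_i)}{\sum_{j=1}^{n}\exp(\boldsymbol{z}_i^{\top}\boldsymbol{c}_j)}-\frac{1}{n}\sum_{i=1}^{n}\log\frac{\exp(\boldsymbol{c}_i^{\top}\boldsymbol{z}_i)}{\sum_{j=1}^{n}\exp(\boldsymbol{c}_i^{\top}\boldsymbol{z}_j)}. \] Then \[ \mathcal{L}_{\rm SCE}\ \ge\ -\frac{2}{n}\sum_{i=1}^{n}\boldsymbol{z}_i^{\top}\boldsymbol{c}_i+\frac{2}{n}\sum_{i=1}^{n}\sum_{k=1}^{N_C}\frac{|\mathcal{C}_k|}{n}\boldsymbol{z}_i^{\top}\boldsymbol{c}_k. \]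
   Context: In this setting (contrastive prototype–image adaptation), the prototype embeddings are expanded to one row per support sample via $YY^{\top}$ applied to the embeddings, where $Y$ is the one-hot label matrix, so the $i$-th prototype representation is the prototype representation of the class of sample $i$; there are thus $|\mathcal{C}_k|$ identical copies of $\boldsymbol{c}_k$ among $\boldsymbol{c}_1,\dots,\boldsymbol{c}_n$. *)

theory Defs
  imports "HOL-Analysis.Analysis"
begin

text \<open>Samples are indexed by 1..n, classes by 1..NC. z i is the representation of sample i,
  y i its label, c k the prototype of class k; the expanded prototype of sample i is c (y i).\<close>

definition class_set :: "nat \<Rightarrow> (nat \<Rightarrow> nat) \<Rightarrow> nat \<Rightarrow> nat set" where
  "class_set n y k = {i \<in> {1..n}. y i = k}"

definition L_SCE :: "nat \<Rightarrow> (nat \<Rightarrow> real^'d) \<Rightarrow> (nat \<Rightarrow> real^'d) \<Rightarrow> real" where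
  "L_SCE n z cc =
     - (1 / real n) * (\<Sum>i=1..n. ln (exp (z i \<bullet> cc i) / (\<Sum>j=1..n. exp (z i \<bullet> cc j))))
     - (1 / real n) * (\<Sum>i=1..n. ln (exp (cc i \<bullet> z i) / (\<Sum>j=1..n. exp (cc i \<bullet> z j))))"

end

theory Submission
  imports Defs
begin

text \<open>Both terms of \<open>L_SCE\<close> are the row-wise softmax cross-entropy of a score matrix
  (once for \<open>z\<^sub>i\<^sup>T c\<^sub>j\<close>, once for its transpose). By convexity of \<open>exp\<close>, the log-sum-exp of a row is at
  least \<open>ln n\<close> plus the row mean, so each term is bounded below by \<open>ln n\<close> minus the mean diagonal
  score plus the mean of all scores. Grouping the columns by class turns the mean of all scores
  into the class-frequency weighted sum; the leftover \<open>2 ln n\<close> is nonnegative.\<close>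

lemma ln_sum_exp_ge_mean:
  fixes x :: "'a \<Rightarrow> real"
  assumes "finite A" and "A \<noteq> {}"
  shows "ln (real (card A)) + (\<Sum>j\<in>A. x j) / real (card A) \<le> ln (\<Sum>j\<in>A. exp (x j))"
proof -
  define m where "m = (\<Sum>j\<in>A. x j) / real (card A)"
  have card_pos: "real (card A) > 0"
    using assms by (simp add: card_gt_0_iff)
  have tangent: "exp m * (1 + (x j - m)) \<le> exp (x j)" for j
  proof -
    have "exp m * (1 + (x j - m)) \<le> exp m * exp (x j - m)"
      by (intro mult_left_mono exp_ge_add_one_self) simp
    also have "\<dots> = exp (x j)"
      by (simp add: exp_diff)
    finally show ?thesis .
  qed
  have "(\<Sum>j\<in>A. exp m * (1 + (x j - m))) = exp m * real (card A)"
    using card_pos by (simp add: sum_distrib_left[symmetric] sum.distrib sum_subtractf m_def)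
  with tangent have "exp m * real (card A) \<le> (\<Sum>j\<in>A. exp (x j))"
    by (metis sum_mono)
  then have "ln (exp m * real (card A)) \<le> ln (\<Sum>j\<in>A. exp (x j))"
    using card_pos by (intro ln_mono) auto
  then show ?thesis
    using card_pos by (simp add: ln_mult m_def add.commute)
qed

definition softmax_cross_entropy :: "nat \<Rightarrow> (nat \<Rightarrow> nat \<Rightarrow> real) \<Rightarrow> real" where
  "softmax_cross_entropy n s =
     - (1 / real n) * (\<Sum>i=1..n. ln (exp (s i i) / (\<Sum>j=1..n. exp (s i j))))"

lemma L_SCE_eq_softmax_cross_entropy:
  "L_SCE n z cc = softmax_cross_entropy n (\<lambda>i j. z i \<bullet> cc j)
                 + softmax_cross_entropy n (\<lambda>i j. cc i \<bullet> z j)"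
  by (simp add: L_SCE_def softmax_cross_entropy_def)

lemma softmax_cross_entropy_ge:
  assumes "n \<ge> 1"
  shows "ln (real n) - (\<Sum>i=1..n. s i i) / real n + (\<Sum>i=1..n. \<Sum>j=1..n. s i j) / (real n)\<^sup>2
           \<le> softmax_cross_entropy n s"
proof -
  have n_pos: "real n > 0"
    using assms by simp
  have row: "ln (real n) + (\<Sum>j=1..n. s i j) / real n - s i i
               \<le> - ln (exp (s i i) / (\<Sum>j=1..n. exp (s i j)))" for i
  proof -
    have "0 < (\<Sum>j=1..n. exp (s i j))"
      using assms by (intro sum_pos) auto
    then have "- ln (exp (s i i) / (\<Sum>j=1..n. exp (s i j))) = ln (\<Sum>j=1..n. exp (s i j)) - s i i"
      by (simp add: ln_div)
    moreover have "ln (real n) + (\<Sum>j=1..n. s i j) / real n \<le> ln (\<Sum>j=1..n. exp (s i j))"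
      using ln_sum_exp_ge_mean[of "{1..n}" "s i"] assms by simp
    ultimately show ?thesis
      by linarith
  qed
  have "real n * ln (real n) + (\<Sum>i=1..n. \<Sum>j=1..n. s i j) / real n - (\<Sum>i=1..n. s i i)
          = (\<Sum>i=1..n. ln (real n) + (\<Sum>j=1..n. s i j) / real n - s i i)"
    by (simp add: sum.distrib sum_subtractf sum_divide_distrib)
  also have "\<dots> \<le> (\<Sum>i=1..n. - ln (exp (s i i) / (\<Sum>j=1..n. exp (s i j))))"
    by (intro sum_mono row)
  also have "\<dots> = real n * softmax_cross_entropy n s"
    using n_pos by (simp add: softmax_cross_entropy_def sum_negf)
  finally have "real n * ln (real n) + (\<Sum>i=1..n. \<Sum>j=1..n. s i j) / real n - (\<Sum>i=1..n. s i i)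
                  \<le> real n * softmax_cross_entropy n s" .
  then show ?thesis
    using n_pos by (simp add: field_simps power2_eq_square)
qed

lemma sum_over_labels_eq_class_card_sum:
  fixes f :: "nat \<Rightarrow> real"
  assumes "\<And>i. i \<in> {1..n} \<Longrightarrow> y i \<in> {1..NC}"
  shows "(\<Sum>j=1..n. f (y j)) = (\<Sum>k=1..NC. real (card (class_set n y k)) * f k)"
proof -
  have "(\<Sum>j=1..n. f (y j)) = (\<Sum>k=1..NC. \<Sum>j\<in>class_set n y k. f (y j))"
    using assms unfolding class_set_def by (intro sum.group[symmetric]) auto
  also have "\<dots> = (\<Sum>k=1..NC. real (card (class_set n y k)) * f k)"
    by (intro sum.cong refl) (simp add: class_set_def)
  finally show ?thesis .
qed

theorem theorem3:
  fixes n NC :: nat and z :: "nat \<Rightarrow> real^'d" and y :: "nat \<Rightarrow> nat"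
    and c :: "nat \<Rightarrow> real^'d"
  assumes "n \<ge> 1"
    and "\<And>i. i \<in> {1..n} \<Longrightarrow> norm (z i) = 1"
    and "\<And>i. i \<in> {1..n} \<Longrightarrow> y i \<in> {1..NC}"
    and "\<And>k. k \<in> {1..NC} \<Longrightarrow> norm (c k) = 1"
  shows "L_SCE n z (\<lambda>i. c (y i)) \<ge>
     - (2 / real n) * (\<Sum>i=1..n. z i \<bullet> c (y i))
     + (2 / real n) * (\<Sum>i=1..n. \<Sum>k=1..NC.
          (real (card (class_set n y k)) / real n) * (z i \<bullet> c k))"
proof -
  define s where "s i j = z i \<bullet> c (y j)" for i j
  define D where "D = (\<Sum>i=1..n. \<Sum>j=1..n. s i j)"
  have n_pos: "real n > 0"
    using assms(1) by simp
  have "L_SCE n z (\<lambda>i. c (y i)) = softmax_cross_entropy n s + softmax_cross_entropy n (\<lambda>i j. s j i)"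
    unfolding s_def by (simp add: L_SCE_eq_softmax_cross_entropy inner_commute)
  moreover have "ln (real n) - (\<Sum>i=1..n. s i i) / real n + D / (real n)\<^sup>2 \<le> softmax_cross_entropy n s"
    unfolding D_def by (rule softmax_cross_entropy_ge[OF assms(1)])
  moreover have "ln (real n) - (\<Sum>i=1..n. s i i) / real n + D / (real n)\<^sup>2
                   \<le> softmax_cross_entropy n (\<lambda>i j. s j i)"
    using softmax_cross_entropy_ge[OF assms(1), of "\<lambda>i j. s j i"]
    unfolding D_def sum.swap[of "\<lambda>i j. s j i"] .
  ultimately have "2 * (ln (real n) - (\<Sum>i=1..n. s i i) / real n + D / (real n)\<^sup>2)
                     \<le> L_SCE n z (\<lambda>i. c (y i))"
    by (metis add_mono mult_2)
  moreover have "D / real n = (\<Sum>i=1..n. \<Sum>k=1..NC. (real (card (class_set n y k)) / real n) * (z i \<bullet> c k))"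
  proof -
    have "(\<Sum>j=1..n. s i j) = (\<Sum>k=1..NC. real (card (class_set n y k)) * (z i \<bullet> c k))" for i
      unfolding s_def by (rule sum_over_labels_eq_class_card_sum[OF assms(3)])
    then show ?thesis
      unfolding D_def by (simp add: sum_divide_distrib)
  qed
  ultimately have "2 * ln (real n) + (- (2 / real n) * (\<Sum>i=1..n. z i \<bullet> c (y i))
      + (2 / real n) * (\<Sum>i=1..n. \<Sum>k=1..NC. (real (card (class_set n y k)) / real n) * (z i \<bullet> c k)))
        \<le> L_SCE n z (\<lambda>i. c (y i))"
    using n_pos by (simp add: s_def field_simps power2_eq_square)
  moreover have "ln (real n) \<ge> 0"
    using assms(1) by simp
  ultimately show ?thesis
    by linarith
qed

end
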